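(* Fix $\varepsilon>0$ and any online sequence of service requests. Whenever the algorithm c-REShare$(\varepsilon)$ (defined in the context) handles the arrival of a request $r$, placing all its jobs in a node $i^*$ at layer $\ell^*(r)$ and allocating the VM capabilities $\mu_{b}$ as it prescribes, the resulting deployment of request $r$ is feasible.
   Context: Network: an undirected layered graph whose vertices (nodes) are datacenters. A node is at layer $\ell\ge 0$ if its distance in links from the closest leaf is $\ell$ (leaves are at layer $0$). Every node can host arbitrarily many virtual machines (VMs). Each VM $b$ runs exactly one virtual network function (VNF) $v$ from a finite set $\mathcal V$, has maximum computing capability $\bar\mu>0$ and an allocated capability $\mu_b\le\bar\mu$. Each VNF $v$ has computing complexity $\theta_v\in(0,1]$. Requests: requests $r$ arrive online; each has a set $\mathcal V_r\subseteq\mathcal V$ of VNFs, an arrival time $a_r$, a duration $\tau_r$, a traffic load $\lambda_r\ge\lambda_{\min}$ where $\lambda_{\min}=\inf_r\lambda_r>0$ is known in advance, an end-to-end delay target $D_r$, and an arrival leaf. For $v\in\mathcal V_r$ the pair $(r,v)$ is a job; all jobs of $r$ arrive at $a_r$ and are removed at $a_r+\tau_r$. For a VM $b$ running $v$, $\Lambda(b)$ is the total load $\sum\lambda_{r'}$ of jobs $(r',v)$ assigned to $b$, and every job on $b$ experiences processing latency $1/(\mu_b-\theta_v\Lambda(b))$ (which requires $\mu_b>\theta_v\Lambda(b)$). The forwarding latency from a leaf to a node at layer $\ell$ is $d_\ell$, with $d_{\ell+1}>d_\ell$. The latency of request $r$ is the maximum of $d_\ell$ over the layers $\ell$ hosting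 its jobs plus the sum over its jobs of their processing latencies. Fair delay allocation: $M_{r,v}=1/(\bar\mu-\theta_v\lambda_r)$; $\ell^*(r)$ is the highest layer $\ell$ with $d_\ell+\sum_{v\in\mathcal V_r}M_{r,v}\le D_r$ (assumed to exist); $D_r^v=\frac{M_{r,v}}{\sum_{u\in\mathcal V_r}M_{r,u}}\,(D_r-d_{\ell^*(r)})$. A deployment of $r$ is feasible if each job $(r,v)$ is on a VM $b$ running $v$ with $\mu_b\le\bar\mu$ and $1/(\mu_b-\theta_v\Lambda(b))\le D_r^v$, and the latency of $r$ is at most $D_r$. Latency ranges: for $\varepsilon>0$, $L_0=\big[\frac{1}{\bar\mu-\lambda_{\min}},\frac{1}{\bar\mu-\lambda_{\min}(1+\varepsilon)}\big]$ and $L_j=\big(\frac{1}{\bar\mu-\lambda_{\min}(1+\varepsilon)^j},\frac{1}{\bar\mu-\lambda_{\min}(1+\varepsilon)^{j+1}}\big]$ for $j\ge1$, over the indices $j$ with $\lambda_{\min}(1+\varepsilon)^{j+1}<\bar\mu$. A job $(r,v)$ is associated with $L_j$ if $D_r^v\in L_j$ (every fair delay allocation is presumed to lie in some range). Algorithm c-REShare$(\varepsilon)$: on arrival of $r$, compute $\ell^*(r)$ and choose a node $i^*$ at layer $\ell^*(r)$ (e.g., the least loaded one). For each $v\in\mathcal V_r$, with $j$ such that $D_r^v\in L_j$: a VM $b$ in $i^*$ running $v$ and hosting jobs associated with $L_j$ is viable if $\frac{1}{\bar\mu-\theta_v(\Lambda(b)+\lambda_r)}\le D_r^v$ and $\frac{1}{\bar\mu-\theta_v(\Lambda(b)+\lambda_r)}\le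 D_{r'}^v$ for every job $(r',v)$ already on $b$. If viable VMs exist, place $(r,v)$ on the viable VM with the largest $\Lambda(b)$ and set its capability to $\theta_v\Lambda(b)+1/\min_{(r',v)\in b}D_{r'}^v$ (with $\Lambda(b)$ and the minimum computed including the new job); otherwise open a new VM in $i^*$ running $v$, place $(r,v)$ on it and set its capability to $\theta_v\lambda_r+1/D_r^v$. On departure of $r$, remove each $(r,v)$ from its VM $b$ and reset $\mu_b=\theta_v\Lambda(b)+1/\min_{(r',v)\in b}D_{r'}^v$ over the remaining jobs. *)

theory Defs
  imports Main "HOL-Library.Extended_Real" Complex_Main
begin

definition layer :: "('n \<times> 'n) set \<Rightarrow> 'n set \<Rightarrow> 'n \<Rightarrow> nat" where
  "layer E Lf i = (LEAST k. \<exists>l\<in>Lf. (l, i) \<in> E ^^ k)"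

definition layered_network :: "'n set \<Rightarrow> ('n \<times> 'n) set \<Rightarrow> 'n set \<Rightarrow> bool" where
  "layered_network N E Lf \<longleftrightarrow> finite N \<and> N \<noteq> {} \<and> E \<subseteq> N \<times> N \<and> sym E \<and>
     Lf \<subseteq> N \<and> Lf \<noteq> {} \<and> (\<forall>i\<in>N. \<exists>l\<in>Lf. (l, i) \<in> E\<^sup>*)"

record ('v, 'r) sys =
  mubar :: real               \<comment> \<open>maximum computing capability of a VM\<close>
  theta :: "'v \<Rightarrow> real"      \<comment> \<open>computing complexity of a VNF\<close>
  dl    :: "nat \<Rightarrow> real"     \<comment> \<open>forwarding latency from a leaf to layer l\<close>
  lmin  :: real
  VNFs  :: "'r \<Rightarrow> 'v set"
  lam   :: "'r \<Rightarrow> real"     \<comment> \<open>traffic load of a request\<close>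
  Dt    :: "'r \<Rightarrow> real"     \<comment> \<open>end-to-end delay target of a request\<close>

definition Mrv :: "('v, 'r) sys \<Rightarrow> 'r \<Rightarrow> 'v \<Rightarrow> real" where
  "Mrv P r v = 1 / (mubar P - theta P v * lam P r)"

definition lstar :: "('v, 'r) sys \<Rightarrow> nat set \<Rightarrow> 'r \<Rightarrow> nat" where
  "lstar P Lay r = Max {l \<in> Lay. dl P l + (\<Sum>v\<in>VNFs P r. Mrv P r v) \<le> Dt P r}"

definition Dfair :: "('v, 'r) sys \<Rightarrow> nat set \<Rightarrow> 'r \<Rightarrow> 'v \<Rightarrow> real" where
  "Dfair P Lay r v =
     Mrv P r v / (\<Sum>u\<in>VNFs P r. Mrv P r u) * (Dt P r - dl P (lstar P Lay r))"

definition valid_idx :: "('v, 'r) sys \<Rightarrow> real \<Rightarrow> nat \<Rightarrow> bool" where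
  "valid_idx P eps j \<longleftrightarrow> lmin P * (1 + eps) ^ (j + 1) < mubar P"

definition Lrange :: "('v, 'r) sys \<Rightarrow> real \<Rightarrow> nat \<Rightarrow> real set" where
  "Lrange P eps j =
     (if j = 0 then {1 / (mubar P - lmin P) .. 1 / (mubar P - lmin P * (1 + eps))}
      else {1 / (mubar P - lmin P * (1 + eps) ^ j) <.. 1 / (mubar P - lmin P * (1 + eps) ^ (j + 1))})"

text \<open>A request is admissible if it has a nonempty set of VNFs, each single job fits
  in a VM (theta_v lambda_r < mubar, so that M_{r,v} is a genuine latency), the layer
  l*(r) exists, and each fair delay allocation lies in some latency range.\<close>

definition admissible :: "('v, 'r) sys \<Rightarrow> real \<Rightarrow> nat set \<Rightarrow> 'r \<Rightarrow> bool" where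
  "admissible P eps Lay r \<longleftrightarrow>
     VNFs P r \<noteq> {} \<and>
     (\<forall>v\<in>VNFs P r. theta P v * lam P r < mubar P) \<and>
     {l \<in> Lay. dl P l + (\<Sum>v\<in>VNFs P r. Mrv P r v) \<le> Dt P r} \<noteq> {} \<and>
     (\<forall>v\<in>VNFs P r. \<exists>j. valid_idx P eps j \<and> Dfair P Lay r v \<in> Lrange P eps j)"

text \<open>For an open VM b: host node, the VNF it runs,
  its allocated capability mu_b, the latency-range index of the jobs it hosts, and the
  set of requests r' whose job (r', runs b) is on b.\<close>

record ('n, 'v, 'r) state =
  vms  :: "nat set"
  host :: "nat \<Rightarrow> 'n"
  runs :: "nat \<Rightarrow> 'v"
  cap  :: "nat \<Rightarrow> real"
  cls  :: "nat \<Rightarrow> nat"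
  jobs :: "nat \<Rightarrow> 'r set"

definition empty_state :: "('n, 'v, 'r) state" where
  "empty_state = \<lparr>vms = {}, host = (\<lambda>_. undefined), runs = (\<lambda>_. undefined),
     cap = (\<lambda>_. 0), cls = (\<lambda>_. 0), jobs = (\<lambda>_. {})\<rparr>"

definition Load :: "('v, 'r) sys \<Rightarrow> ('n, 'v, 'r) state \<Rightarrow> nat \<Rightarrow> real" where
  "Load P s b = (\<Sum>r'\<in>jobs s b. lam P r')"

definition viable ::
  "('v, 'r) sys \<Rightarrow> nat set \<Rightarrow> ('n, 'v, 'r) state \<Rightarrow> nat \<Rightarrow> 'r \<Rightarrow> 'v \<Rightarrow> bool" where
  "viable P Lay s b r v \<longleftrightarrow>
     theta P v * (Load P s b + lam P r) < mubar P \<and>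
     1 / (mubar P - theta P v * (Load P s b + lam P r)) \<le> Dfair P Lay r v \<and>
     (\<forall>r'\<in>jobs s b. 1 / (mubar P - theta P v * (Load P s b + lam P r)) \<le> Dfair P Lay r' v)"

definition place_job ::
  "('v, 'r) sys \<Rightarrow> real \<Rightarrow> nat set \<Rightarrow> 'n \<Rightarrow> 'r \<Rightarrow> 'v
     \<Rightarrow> ('n, 'v, 'r) state \<Rightarrow> ('n, 'v, 'r) state \<Rightarrow> bool" where
  "place_job P eps Lay i r v s s' \<longleftrightarrow>
     (\<exists>j. valid_idx P eps j \<and> Dfair P Lay r v \<in> Lrange P eps j \<and>
       (let V = {b \<in> vms s. host s b = i \<and> runs s b = v \<and> cls s b = j \<and> viable P Lay s b r v} in
         (V \<noteq> {} \<and>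
           (\<exists>b\<in>V. (\<forall>b'\<in>V. Load P s b' \<le> Load P s b) \<and>
              s' = s\<lparr>jobs := (jobs s)(b := insert r (jobs s b)),
                     cap := (cap s)(b := theta P v * (Load P s b + lam P r)
                        + 1 / Min ((\<lambda>r'. Dfair P Lay r' v) ` insert r (jobs s b)))\<rparr>))
         \<or>
         (V = {} \<and>
           (\<exists>b. b \<notin> vms s \<and>
              s' = s\<lparr>vms := insert b (vms s), host := (host s)(b := i),
                     runs := (runs s)(b := v),
                     cap := (cap s)(b := theta P v * lam P r + 1 / Dfair P Lay r v),
                     cls := (cls s)(b := j), jobs := (jobs s)(b := {r})\<rparr>))))"

fun place_jobs ::
  "('v, 'r) sys \<Rightarrow> real \<Rightarrow> nat set \<Rightarrow> 'n \<Rightarrow> 'r \<Rightarrow> 'v list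
     \<Rightarrow> ('n, 'v, 'r) state \<Rightarrow> ('n, 'v, 'r) state \<Rightarrow> bool" where
  "place_jobs P eps Lay i r [] s s' \<longleftrightarrow> s' = s"
| "place_jobs P eps Lay i r (v # vs) s s' \<longleftrightarrow>
     (\<exists>t. place_job P eps Lay i r v s t \<and> place_jobs P eps Lay i r vs t s')"

text \<open>Handling of the arrival of request r: choose any node i* at layer l*(r) (e.g. the
  least loaded one) and place the jobs of r one after the other (in any order).\<close>

definition arrive ::
  "('v, 'r) sys \<Rightarrow> real \<Rightarrow> 'n set \<Rightarrow> ('n \<times> 'n) set \<Rightarrow> 'n set \<Rightarrow> 'r
     \<Rightarrow> ('n, 'v, 'r) state \<Rightarrow> ('n, 'v, 'r) state \<Rightarrow> bool" where
  "arrive P eps N E Lf r s s' \<longleftrightarrow>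
     (let Lay = layer E Lf ` N in
      \<exists>istar\<in>N. layer E Lf istar = lstar P Lay r \<and>
        (\<exists>vs. distinct vs \<and> set vs = VNFs P r \<and> place_jobs P eps Lay istar r vs s s'))"

definition depart ::
  "('v, 'r) sys \<Rightarrow> nat set \<Rightarrow> 'r \<Rightarrow> ('n, 'v, 'r) state \<Rightarrow> ('n, 'v, 'r) state" where
  "depart P Lay r s =
     s\<lparr>jobs := (\<lambda>b. jobs s b - {r}),
       cap := (\<lambda>b. if b \<in> vms s \<and> r \<in> jobs s b \<and> jobs s b - {r} \<noteq> {}
                   then theta P (runs s b) * (\<Sum>r'\<in>jobs s b - {r}. lam P r')
                        + 1 / Min ((\<lambda>r'. Dfair P Lay r' (runs s b)) ` (jobs s b - {r}))
                   else cap s b)\<rparr>"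

text \<open>States reachable by the algorithm on an online sequence of arrivals and departures;
  the second component is the set of requests that have already arrived.\<close>

inductive reachable ::
  "('v, 'r) sys \<Rightarrow> real \<Rightarrow> 'n set \<Rightarrow> ('n \<times> 'n) set \<Rightarrow> 'n set
     \<Rightarrow> ('n, 'v, 'r) state \<Rightarrow> 'r set \<Rightarrow> bool"
  for P eps N E Lf where
  init: "reachable P eps N E Lf empty_state {}"
| arr:  "reachable P eps N E Lf s A \<Longrightarrow> r \<notin> A \<Longrightarrow> arrive P eps N E Lf r s s'
           \<Longrightarrow> reachable P eps N E Lf s' (insert r A)"
| dep:  "reachable P eps N E Lf s A \<Longrightarrow> r \<in> A
           \<Longrightarrow> reachable P eps N E Lf (depart P (layer E Lf ` N) r s) A"

definition proc_lat :: "('v, 'r) sys \<Rightarrow> ('n, 'v, 'r) state \<Rightarrow> nat \<Rightarrow> real" where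
  "proc_lat P s b = 1 / (cap s b - theta P (runs s b) * Load P s b)"

definition latency ::
  "('v, 'r) sys \<Rightarrow> ('n \<times> 'n) set \<Rightarrow> 'n set \<Rightarrow> ('n, 'v, 'r) state \<Rightarrow> 'r
     \<Rightarrow> ('v \<Rightarrow> nat) \<Rightarrow> real" where
  "latency P E Lf s r pl =
     Max ((\<lambda>v. dl P (layer E Lf (host s (pl v)))) ` VNFs P r)
     + (\<Sum>v\<in>VNFs P r. proc_lat P s (pl v))"

definition feasible ::
  "('v, 'r) sys \<Rightarrow> 'n set \<Rightarrow> ('n \<times> 'n) set \<Rightarrow> 'n set \<Rightarrow> ('n, 'v, 'r) state \<Rightarrow> 'r \<Rightarrow> bool" where
  "feasible P N E Lf s r \<longleftrightarrow>
     (let Lay = layer E Lf ` N in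
      \<exists>pl. (\<forall>v\<in>VNFs P r. \<forall>b. (b \<in> vms s \<and> runs s b = v \<and> r \<in> jobs s b) \<longleftrightarrow> b = pl v) \<and>
           (\<forall>v\<in>VNFs P r.
              cap s (pl v) \<le> mubar P \<and>
              theta P v * Load P s (pl v) < cap s (pl v) \<and>
              proc_lat P s (pl v) \<le> Dfair P Lay r v) \<and>
           latency P E Lf s r pl \<le> Dt P r)"

end

theory Submission
  imports Defs
begin

text \<open>The fair allocation satisfies M(r,v) <= D(r,v) and sum_v D(r,v) = D_r - d(l*(r)).
  When the job (r,v) lands on a VM whose load becomes Lambda, viability (or, on a new VM,
  M(r,v) <= D(r,v)) gives 1/(mubar - theta_v Lambda) <= m for the smallest fair allocation m
  among the jobs on that VM, so the capability theta_v Lambda + 1/m is at most mubar and yields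
  processing latency exactly m <= D(r,v). Placing the job for one VNF touches only VMs running
  that VNF, so every job of the fresh request r ends up on exactly one VM and keeps these
  guarantees. All jobs sit in one node at layer l*(r), hence the latency of r is at most
  d(l*(r)) + sum_v D(r,v) = D_r.\<close>

lemma lstar_meets_target:
  assumes "admissible P eps Lay r" and "finite Lay"
  shows "dl P (lstar P Lay r) + (\<Sum>v\<in>VNFs P r. Mrv P r v) \<le> Dt P r"
proof -
  have "lstar P Lay r \<in> {l \<in> Lay. dl P l + (\<Sum>v\<in>VNFs P r. Mrv P r v) \<le> Dt P r}"
    unfolding lstar_def using assms by (intro Max_in) (auto simp: admissible_def)
  then show ?thesis by simp
qed

lemma Mrv_pos:
  assumes "admissible P eps Lay r" and "v \<in> VNFs P r"
  shows "Mrv P r v > 0"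
  using assms by (simp add: admissible_def Mrv_def)

lemma sum_Mrv_pos:
  assumes "admissible P eps Lay r" and "finite (VNFs P r)"
  shows "(\<Sum>v\<in>VNFs P r. Mrv P r v) > 0"
  using assms Mrv_pos[OF assms(1)] by (intro sum_pos) (auto simp: admissible_def)

lemma Mrv_le_Dfair:
  assumes adm: "admissible P eps Lay r" and "finite Lay" and "finite (VNFs P r)"
    and v: "v \<in> VNFs P r"
  shows "Mrv P r v \<le> Dfair P Lay r v"
proof -
  define S where "S = (\<Sum>u\<in>VNFs P r. Mrv P r u)"
  have S: "S > 0" "S \<le> Dt P r - dl P (lstar P Lay r)"
    using sum_Mrv_pos[OF adm] lstar_meets_target[OF adm] assms by (auto simp: S_def)
  have "Mrv P r v = Mrv P r v / S * S" using S by simp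
  also have "\<dots> \<le> Mrv P r v / S * (Dt P r - dl P (lstar P Lay r))"
    using S Mrv_pos[OF adm v] by (intro mult_left_mono) auto
  finally show ?thesis by (simp add: Dfair_def S_def)
qed

lemma sum_Dfair:
  assumes "admissible P eps Lay r" and "finite (VNFs P r)"
  shows "(\<Sum>v\<in>VNFs P r. Dfair P Lay r v) = Dt P r - dl P (lstar P Lay r)"
proof -
  define S where "S = (\<Sum>u\<in>VNFs P r. Mrv P r u)"
  have "S \<noteq> 0" using sum_Mrv_pos[OF assms] by (simp add: S_def)
  have "(\<Sum>v\<in>VNFs P r. Dfair P Lay r v) = (\<Sum>v\<in>VNFs P r. Mrv P r v / S) * (Dt P r - dl P (lstar P Lay r))"
    by (simp add: Dfair_def S_def sum_distrib_right)
  also have "\<dots> = S / S * (Dt P r - dl P (lstar P Lay r))"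
    by (simp only: S_def sum_divide_distrib)
  finally show ?thesis using \<open>S \<noteq> 0\<close> by simp
qed

lemma capability_allocation:
  fixes x m mu :: real
  assumes "x < mu" and "1 / (mu - x) \<le> m"
  shows "0 < m" and "x + 1 / m \<le> mu"
proof -
  have "0 < 1 / (mu - x)" using assms(1) by simp
  then show "0 < m" using assms(2) by linarith
  then have "1 / m \<le> mu - x"
    using assms by (simp add: divide_simps mult.commute)
  then show "x + 1 / m \<le> mu" by simp
qed

definition job_vms :: "('n, 'v, 'r) state \<Rightarrow> 'r \<Rightarrow> 'v \<Rightarrow> nat set" where
  "job_vms s r v = {b \<in> vms s. runs s b = v \<and> r \<in> jobs s b}"

definition serves ::
  "('v, 'r) sys \<Rightarrow> nat set \<Rightarrow> 'n \<Rightarrow> ('n, 'v, 'r) state \<Rightarrow> nat \<Rightarrow> 'r \<Rightarrow> 'v \<Rightarrow> bool" where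
  "serves P Lay i s b r v \<longleftrightarrow> b \<in> vms s \<and> runs s b = v \<and> r \<in> jobs s b \<and> host s b = i \<and>
     cap s b \<le> mubar P \<and> theta P v * Load P s b < cap s b \<and> proc_lat P s b \<le> Dfair P Lay r v"

definition same_vm :: "('n, 'v, 'r) state \<Rightarrow> ('n, 'v, 'r) state \<Rightarrow> nat \<Rightarrow> bool" where
  "same_vm s t b \<longleftrightarrow> b \<in> vms s \<and> b \<in> vms t \<and> host t b = host s b \<and> runs t b = runs s b \<and>
     cap t b = cap s b \<and> jobs t b = jobs s b"

lemma serves_same_vm:
  "serves P Lay i s b r v \<Longrightarrow> same_vm s t b \<Longrightarrow> serves P Lay i t b r v"
  by (auto simp: serves_def same_vm_def proc_lat_def Load_def)

lemma place_job_cases: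
  assumes "place_job P eps Lay i r v s t"
  obtains (existing) b where "b \<in> vms s" "host s b = i" "runs s b = v" "viable P Lay s b r v"
    "t = s\<lparr>jobs := (jobs s)(b := insert r (jobs s b)),
           cap := (cap s)(b := theta P v * (Load P s b + lam P r)
              + 1 / Min ((\<lambda>r'. Dfair P Lay r' v) ` insert r (jobs s b)))\<rparr>"
  | (new) b j where "b \<notin> vms s"
    "t = s\<lparr>vms := insert b (vms s), host := (host s)(b := i), runs := (runs s)(b := v),
           cap := (cap s)(b := theta P v * lam P r + 1 / Dfair P Lay r v),
           cls := (cls s)(b := j), jobs := (jobs s)(b := {r})\<rparr>"
  using assms unfolding place_job_def Let_def by blast

lemma place_job_jobs_subset:
  "place_job P eps Lay i r v s t \<Longrightarrow> jobs t b \<subseteq> insert r (jobs s b)"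
  by (erule place_job_cases) auto

lemma place_job_keeps_vms:
  "place_job P eps Lay i r v s t \<Longrightarrow> b \<in> vms s \<Longrightarrow> b \<in> vms t \<and> runs t b = runs s b"
  by (erule place_job_cases) auto

lemma place_job_same_vm:
  "place_job P eps Lay i r v s t \<Longrightarrow> b \<in> vms t \<Longrightarrow> runs t b \<noteq> v \<Longrightarrow> same_vm s t b"
  by (erule place_job_cases) (auto simp: same_vm_def split: if_splits)

lemma place_job_other_vnf:
  assumes pj: "place_job P eps Lay i r v s t" and "v' \<noteq> v"
  shows "job_vms t r v' = job_vms s r v'"
    and "serves P Lay i' s b r' v' \<Longrightarrow> serves P Lay i' t b r' v'"
proof -
  have same: "same_vm s t b" if "b \<in> vms s" "runs s b = v'" for b
    using place_job_keeps_vms[OF pj] place_job_same_vm[OF pj] that \<open>v' \<noteq> v\<close> by simp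
  show "job_vms t r v' = job_vms s r v'"
  proof (intro set_eqI iffI)
    fix b assume "b \<in> job_vms t r v'"
    then show "b \<in> job_vms s r v'"
      using place_job_same_vm[OF pj] \<open>v' \<noteq> v\<close> by (auto simp: job_vms_def same_vm_def)
  next
    fix b assume "b \<in> job_vms s r v'"
    then show "b \<in> job_vms t r v'"
      using same by (auto simp: job_vms_def same_vm_def)
  qed
  show "serves P Lay i' t b r' v'" if "serves P Lay i' s b r' v'"
    using that by (intro serves_same_vm[OF that] same) (auto simp: serves_def)
qed

lemma place_job_serves:
  assumes pj: "place_job P eps Lay i r v s t"
    and fin: "\<forall>b. finite (jobs s b)"
    and fresh: "job_vms s r v = {}"
    and fits: "theta P v * lam P r < mubar P"
    and Mrv_le: "Mrv P r v \<le> Dfair P Lay r v"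
  shows "\<exists>b. serves P Lay i t b r v \<and> job_vms t r v = {b}"
  using pj
proof (cases rule: place_job_cases)
  case (existing b)
  define x where "x = theta P v * (Load P s b + lam P r)"
  define m where "m = Min ((\<lambda>r'. Dfair P Lay r' v) ` insert r (jobs s b))"
  have "r \<notin> jobs s b" using fresh existing by (auto simp: job_vms_def)
  then have load: "Load P t b = Load P s b + lam P r"
    using existing fin by (simp add: Load_def)
  have viable: "x < mubar P" "1 / (mubar P - x) \<le> Dfair P Lay r v"
    "\<forall>r'\<in>jobs s b. 1 / (mubar P - x) \<le> Dfair P Lay r' v"
    using existing(4) by (auto simp: viable_def x_def)
  have "1 / (mubar P - x) \<le> m" unfolding m_def using fin viable by (subst Min_ge_iff) auto
  then have "0 < m" "x + 1 / m \<le> mubar P"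
    using capability_allocation[OF viable(1)] by auto
  moreover have "m \<le> Dfair P Lay r v" unfolding m_def using fin by (intro Min_le) auto
  ultimately have "serves P Lay i t b r v"
    using existing load by (simp add: serves_def proc_lat_def x_def m_def)
  moreover have "job_vms t r v = {b}"
    using existing fresh unfolding job_vms_def by auto
  ultimately show ?thesis by blast
next
  case (new b j)
  have "0 < Dfair P Lay r v" "theta P v * lam P r + 1 / Dfair P Lay r v \<le> mubar P"
    using capability_allocation[OF fits] Mrv_le by (auto simp: Mrv_def)
  then have "serves P Lay i t b r v"
    using new by (simp add: serves_def proc_lat_def Load_def)
  moreover have "job_vms t r v = {b}"
    using new fresh unfolding job_vms_def by auto
  ultimately show ?thesis by blast
qed

lemma place_jobs_jobs_subset:
  "place_jobs P eps Lay i r vs s s' \<Longrightarrow> jobs s' b \<subseteq> insert r (jobs s b)"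
proof (induction vs arbitrary: s)
  case (Cons v vs)
  then obtain t where t: "place_job P eps Lay i r v s t" "place_jobs P eps Lay i r vs t s'"
    by auto
  have "jobs s' b \<subseteq> insert r (jobs t b)" using Cons.IH[OF t(2)] .
  moreover have "jobs t b \<subseteq> insert r (jobs s b)" using place_job_jobs_subset[OF t(1)] .
  ultimately show ?case by blast
qed auto

lemma place_jobs_other_vnf:
  assumes "place_jobs P eps Lay i r vs s s'" and "v \<notin> set vs"
  shows "job_vms s' r v = job_vms s r v"
    and "serves P Lay i' s b r' v \<Longrightarrow> serves P Lay i' s' b r' v"
  using assms
proof (induction vs arbitrary: s)
  case (Cons u vs)
  { case 1
    then obtain t where "place_job P eps Lay i r u s t" "place_jobs P eps Lay i r vs t s'" by auto
    with Cons.IH(1) 1 show ?case using place_job_other_vnf(1) by force }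
  { case 2
    then obtain t where "place_job P eps Lay i r u s t" "place_jobs P eps Lay i r vs t s'" by auto
    with Cons.IH(2) 2 show ?case using place_job_other_vnf(2) by force }
qed simp_all

lemma place_jobs_serves:
  assumes "place_jobs P eps Lay i r vs s s'" and "distinct vs"
    and "\<forall>b. finite (jobs s b)"
    and "\<forall>v\<in>set vs. job_vms s r v = {}"
    and "\<forall>v\<in>set vs. theta P v * lam P r < mubar P \<and> Mrv P r v \<le> Dfair P Lay r v"
  shows "\<forall>v\<in>set vs. \<exists>b. serves P Lay i s' b r v \<and> job_vms s' r v = {b}"
  using assms
proof (induction vs arbitrary: s)
  case (Cons v vs)
  then obtain t where t: "place_job P eps Lay i r v s t" "place_jobs P eps Lay i r vs t s'"
    by auto
  have v: "v \<notin> set vs" using Cons.prems(2) by simp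
  obtain b where b: "serves P Lay i t b r v" "job_vms t r v = {b}"
    using place_job_serves[OF t(1)] Cons.prems by auto
  have "serves P Lay i s' b r v \<and> job_vms s' r v = {b}"
    using place_jobs_other_vnf[OF t(2) v] b by simp
  moreover have "\<forall>b. finite (jobs t b)"
    using place_job_jobs_subset[OF t(1)] Cons.prems(3) by (meson finite_insert finite_subset)
  moreover have "\<forall>u\<in>set vs. job_vms t r u = {}"
    using place_job_other_vnf(1)[OF t(1)] Cons.prems(4) v by force
  ultimately show ?case using Cons.IH[OF t(2)] Cons.prems by auto
qed simp

lemma reachable_jobs:
  "reachable P eps N E Lf s A \<Longrightarrow> finite (jobs s b) \<and> jobs s b \<subseteq> A"
proof (induction arbitrary: b rule: reachable.induct)
  case (arr s A r s')
  then obtain i vs where "place_jobs P eps (layer E Lf ` N) i r vs s s'"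
    unfolding arrive_def Let_def by blast
  from place_jobs_jobs_subset[OF this, of b] arr.IH[of b] show ?case
    by (meson finite_insert finite_subset insert_mono order_trans)
qed (auto simp: empty_state_def depart_def)

theorem lemma1:
  fixes P :: "('v::finite, 'r) sys"
    and eps :: real
    and N :: "'n set" and E :: "('n \<times> 'n) set" and Lf :: "'n set"
    and s s' :: "('n, 'v, 'r) state" and A :: "'r set" and r :: 'r
  assumes net: "layered_network N E Lf"
    and mubar_pos: "mubar P > 0"
    and theta: "\<forall>v. 0 < theta P v \<and> theta P v \<le> 1"
    and d_mono: "\<forall>l. dl P l < dl P (Suc l)"
    and lmin_lb: "\<forall>r'. lmin P \<le> lam P r'"
    and lmin_inf: "lmin P = (INF r'. lam P r')"
    and lmin_pos: "lmin P > 0"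
    and eps_pos: "eps > 0"
    and adm: "\<forall>r'. admissible P eps (layer E Lf ` N) r'"
    and reach: "reachable P eps N E Lf s A"
    and fresh: "r \<notin> A"
    and step: "arrive P eps N E Lf r s s'"
  shows "feasible P N E Lf s' r"
proof -
  define Lay where "Lay = layer E Lf ` N"
  from step obtain i vs where i: "layer E Lf i = lstar P Lay r"
    and vs: "distinct vs" "set vs = VNFs P r" "place_jobs P eps Lay i r vs s s'"
    unfolding arrive_def Let_def Lay_def by blast
  have adm_r: "admissible P eps Lay r" using adm by (simp add: Lay_def)
  have "finite Lay" using net by (simp add: Lay_def layered_network_def)
  then have "\<forall>v\<in>set vs. theta P v * lam P r < mubar P \<and> Mrv P r v \<le> Dfair P Lay r v"
    using adm_r Mrv_le_Dfair[OF adm_r] vs(2) by (simp add: admissible_def)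
  moreover have "finite (jobs s b) \<and> r \<notin> jobs s b" for b
    using reachable_jobs[OF reach] fresh by blast
  ultimately have "\<forall>v\<in>set vs. \<exists>b. serves P Lay i s' b r v \<and> job_vms s' r v = {b}"
    using place_jobs_serves[OF vs(3,1)] by (simp add: job_vms_def)
  then obtain pl where pl: "\<forall>v\<in>VNFs P r. serves P Lay i s' (pl v) r v \<and> job_vms s' r v = {pl v}"
    using bchoice vs(2) by metis
  have "(\<lambda>v. dl P (layer E Lf (host s' (pl v)))) ` VNFs P r = {dl P (lstar P Lay r)}"
    using pl i adm_r by (auto simp: serves_def admissible_def)
  moreover have "(\<Sum>v\<in>VNFs P r. proc_lat P s' (pl v)) \<le> (\<Sum>v\<in>VNFs P r. Dfair P Lay r v)"
    using pl by (intro sum_mono) (simp add: serves_def)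
  ultimately have "latency P E Lf s' r pl \<le> Dt P r"
    using sum_Dfair[OF adm_r] by (simp add: latency_def)
  moreover have "\<forall>v\<in>VNFs P r. \<forall>b. (b \<in> vms s' \<and> runs s' b = v \<and> r \<in> jobs s' b) \<longleftrightarrow> b = pl v"
    using pl unfolding job_vms_def set_eq_iff by blast
  ultimately show ?thesis
    unfolding feasible_def Let_def Lay_def[symmetric] using pl
    by (intro exI[of _ pl] conjI) (auto simp: serves_def)
qed

end
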